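(* Let $(X,\pi)$ be a finite symmetric two-player game with relative payoff game $(X,\Delta)$. If $(X,\Delta)$ is a generalized ordinal potential game, then imitation is not subject to a money pump.
   Context: $\pi(x,y)$ is the payoff of the player choosing $x$ against $y$; $\Delta(x,y)=\pi(x,y)-\pi(y,x)$. The symmetric game $(X,\Delta)$ is a generalized ordinal potential game if there is $P:X\times X\to\mathbb{R}$ such that for all $y,x,x'\in X$: $\Delta(x,y)-\Delta(x',y)>0$ implies $P(x,y)-P(x',y)>0$, and $\Delta(x,y)-\Delta(x',y)>0$ implies $P(y,x)-P(y,x')>0$. Imitate-the-best: given initial $y_0\in X$ and any opponent sequence $(x_t)_{t\ge0}$, $y_t=x_{t-1}$ if $\Delta(x_{t-1},y_{t-1})>0$ and $y_t=y_{t-1}$ otherwise. Imitation is not subject to a money pump if there is $M\in\mathbb{R}_+$ such that for every $y_0\in X$ and every sequence $(x_t)$, $\limsup_{T\to\infty}\sum_{t=0}^T\Delta(x_t,y_t)\le M$. *)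

theory Defs
  imports Complex_Main "HOL-Library.Extended_Real"
begin

definition relpay :: "('a \<Rightarrow> 'a \<Rightarrow> real) \<Rightarrow> 'a \<Rightarrow> 'a \<Rightarrow> real" where
  "relpay \<pi> x y = \<pi> x y - \<pi> y x"

definition gen_ord_potential :: "('a \<Rightarrow> 'a \<Rightarrow> real) \<Rightarrow> bool" where
  "gen_ord_potential D \<longleftrightarrow> (\<exists>P :: 'a \<Rightarrow> 'a \<Rightarrow> real. \<forall>y x x'.
      (D x y - D x' y > 0 \<longrightarrow> P x y - P x' y > 0) \<and>
      (D x y - D x' y > 0 \<longrightarrow> P y x - P y x' > 0))"

primrec imitate :: "('a \<Rightarrow> 'a \<Rightarrow> real) \<Rightarrow> 'a \<Rightarrow> (nat \<Rightarrow> 'a) \<Rightarrow> nat \<Rightarrow> 'a" where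
  "imitate D y0 xs 0 = y0"
| "imitate D y0 xs (Suc t) =
     (if D (xs t) (imitate D y0 xs t) > 0 then xs t else imitate D y0 xs t)"

definition no_money_pump :: "('a \<Rightarrow> 'a \<Rightarrow> real) \<Rightarrow> bool" where
  "no_money_pump D \<longleftrightarrow> (\<exists>M::real. M \<ge> 0 \<and> (\<forall>y0 xs.
      limsup (\<lambda>T. ereal (\<Sum>t\<le>T. D (xs t) (imitate D y0 xs t))) \<le> ereal M))"

end

theory Submission
  imports Defs
begin

text \<open>
  For a relative payoff game, the diagonal \<open>Q z = P z z\<close> of a generalized ordinal
  potential strictly increases whenever a strategy beats another: from \<open>\<Delta>(x,y) > 0 = \<Delta>(y,y)\<close>
  we get \<open>P(x,y) > P(y,y)\<close>, and from \<open>\<Delta>(x,x) = 0 > \<Delta>(y,x)\<close> we get \<open>P(x,x) > P(x,y)\<close>.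
  Imitate-the-best only ever moves to a strategy that beats the current one, so along its
  trajectory \<open>Q\<close> is non-decreasing and strictly increases at every switch. On a finite
  strategy set there are therefore at most \<open>|X|\<close> switches, and only switching periods
  contribute positive relative payoff, each at most \<open>max |\<Delta>|\<close>.
\<close>

lemma relpay_antisym: "relpay \<pi> x y = - relpay \<pi> y x"
  by (simp add: relpay_def)

lemma gen_ord_potential_diagonal_strict:
  assumes "gen_ord_potential D" and antisym: "\<And>x y. D x y = - D y x"
  obtains Q :: "'a \<Rightarrow> real" where "\<And>x y. D x y > 0 \<Longrightarrow> Q y < Q x"
proof -
  obtain P :: "'a \<Rightarrow> 'a \<Rightarrow> real" where P: "\<And>y x x'.
      (D x y - D x' y > 0 \<longrightarrow> P x y - P x' y > 0) \<and>
      (D x y - D x' y > 0 \<longrightarrow> P y x - P y x' > 0)"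
    using assms(1) unfolding gen_ord_potential_def by blast
  have diag: "D z z = 0" for z
    using antisym[of z z] by simp
  have "P y y < P x x" if "D x y > 0" for x y
  proof -
    have "P y y < P x y"
      using P[of x y y] that diag[of y] by auto
    moreover have "D x x - D y x > 0"
      using that antisym[of y x] diag[of x] by auto
    then have "P x y < P x x"
      using P[of x x y] by auto
    ultimately show ?thesis by linarith
  qed
  then show thesis
    by (rule that)
qed

lemma card_strict_ascents_le_card:
  fixes y :: "nat \<Rightarrow> 'a::finite" and Q :: "'a \<Rightarrow> 'b::linorder"
  assumes mono: "\<And>t. Q (y t) \<le> Q (y (Suc t))"
  shows "card {t. t < T \<and> Q (y t) < Q (y (Suc t))} \<le> card (UNIV :: 'a set)"
proof -
  define below where "below t = card {z. Q z \<le> Q (y t)}" for t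
  have "card {t. t < T \<and> Q (y t) < Q (y (Suc t))} + below 0 \<le> below T"
  proof (induction T)
    case 0
    then show ?case by simp
  next
    case (Suc T)
    have sub: "{z. Q z \<le> Q (y T)} \<subseteq> {z. Q z \<le> Q (y (Suc T))}"
      using mono[of T] by auto
    show ?case
    proof (cases "Q (y T) < Q (y (Suc T))")
      case True
      then have "y (Suc T) \<notin> {z. Q z \<le> Q (y T)}"
        by simp
      then have "{z. Q z \<le> Q (y T)} \<subset> {z. Q z \<le> Q (y (Suc T))}"
        using sub by blast
      then have "below T < below (Suc T)"
        unfolding below_def by (intro psubset_card_mono) auto
      moreover have "{t. t < Suc T \<and> Q (y t) < Q (y (Suc t))}
          = insert T {t. t < T \<and> Q (y t) < Q (y (Suc t))}"
        using True by auto
      ultimately show ?thesis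
        using Suc.IH by simp
    next
      case False
      then have "{t. t < Suc T \<and> Q (y t) < Q (y (Suc t))}
          = {t. t < T \<and> Q (y t) < Q (y (Suc t))}"
        using less_Suc_eq by auto
      moreover have "below T \<le> below (Suc T)"
        unfolding below_def using sub by (intro card_mono) auto
      ultimately show ?thesis
        using Suc.IH by simp
    qed
  qed
  moreover have "below T \<le> card (UNIV :: 'a set)"
    unfolding below_def by (intro card_mono) auto
  ultimately show ?thesis
    by linarith
qed

lemma sum_le_bound_mult_card_pos:
  fixes g :: "nat \<Rightarrow> real"
  assumes "\<And>t. t < T \<Longrightarrow> g t \<le> B"
  shows "(\<Sum>t<T. g t) \<le> B * card {t. t < T \<and> g t > 0}"
proof -
  have "(\<Sum>t<T. g t) \<le> (\<Sum>t<T. if g t > 0 then B else 0)"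
    using assms by (intro sum_mono) auto
  also have "\<dots> = B * card {t. t < T \<and> g t > 0}"
    by (simp add: sum.If_cases lessThan_def Collect_conj_eq Int_commute)
  finally show ?thesis .
qed

lemma imitate_potential_mono:
  fixes Q :: "'a \<Rightarrow> 'b::linorder"
  assumes "\<And>x y. D x y > 0 \<Longrightarrow> Q y < Q x"
  shows "Q (imitate D y0 xs t) \<le> Q (imitate D y0 xs (Suc t))"
    and "D (xs t) (imitate D y0 xs t) > 0 \<Longrightarrow>
           Q (imitate D y0 xs t) < Q (imitate D y0 xs (Suc t))"
  using assms[of "xs t" "imitate D y0 xs t"] by (auto simp: less_imp_le)

lemma imitate_gain_bounded:
  fixes D :: "'a::finite \<Rightarrow> 'a \<Rightarrow> real" and Q :: "'a \<Rightarrow> 'b::linorder"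
  assumes strict: "\<And>x y. D x y > 0 \<Longrightarrow> Q y < Q x"
    and bound: "\<And>x y. D x y \<le> B" and "B \<ge> 0"
  shows "(\<Sum>t<T. D (xs t) (imitate D y0 xs t)) \<le> B * card (UNIV :: 'a set)"
proof -
  let ?y = "imitate D y0 xs"
  have "{t. t < T \<and> D (xs t) (?y t) > 0} \<subseteq> {t. t < T \<and> Q (?y t) < Q (?y (Suc t))}"
    using imitate_potential_mono(2)[where D = D and Q = Q, OF strict] by blast
  then have "card {t. t < T \<and> D (xs t) (?y t) > 0}
      \<le> card {t. t < T \<and> Q (?y t) < Q (?y (Suc t))}"
    by (intro card_mono) auto
  also have "\<dots> \<le> card (UNIV :: 'a set)"
    using imitate_potential_mono(1)[where D = D and Q = Q, OF strict] by (rule card_strict_ascents_le_card)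
  finally have "B * card {t. t < T \<and> D (xs t) (?y t) > 0} \<le> B * card (UNIV :: 'a set)"
    using \<open>B \<ge> 0\<close> by (intro mult_left_mono) auto
  moreover have "(\<Sum>t<T. D (xs t) (?y t)) \<le> B * card {t. t < T \<and> D (xs t) (?y t) > 0}"
    using bound by (rule sum_le_bound_mult_card_pos)
  ultimately show ?thesis
    by linarith
qed

lemma strict_potential_imp_no_money_pump:
  fixes D :: "'a::finite \<Rightarrow> 'a \<Rightarrow> real" and Q :: "'a \<Rightarrow> 'b::linorder"
  assumes strict: "\<And>x y. D x y > 0 \<Longrightarrow> Q y < Q x"
  shows "no_money_pump D"
proof -
  define B where "B = Max (range (\<lambda>(x, y). \<bar>D x y\<bar>))"
  have bound: "D x y \<le> B" for x y
  proof -
    have "\<bar>D x y\<bar> \<le> B"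
      unfolding B_def by (rule Max_ge) (auto intro: rev_image_eqI[of "(x, y)"])
    then show ?thesis by simp
  qed
  have "B \<ge> 0"
    unfolding B_def
    by (intro order.trans[OF abs_ge_zero Max_ge]) (auto intro: rev_image_eqI[of "(undefined, undefined)"])
  have "(\<Sum>t\<le>T. D (xs t) (imitate D y0 xs t)) \<le> B * card (UNIV :: 'a set)" for y0 xs T
    using imitate_gain_bounded[OF strict bound \<open>B \<ge> 0\<close>, where T = "Suc T"]
    by (simp add: lessThan_Suc_atMost)
  then have "limsup (\<lambda>T. ereal (\<Sum>t\<le>T. D (xs t) (imitate D y0 xs t)))
      \<le> ereal (B * card (UNIV :: 'a set))" for y0 xs
    by (intro Limsup_bounded) auto
  then show ?thesis
    unfolding no_money_pump_def using \<open>B \<ge> 0\<close> by (intro exI[of _ "B * card (UNIV :: 'a set)"]) auto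
qed

theorem proposition4:
  fixes \<pi> :: "'a::finite \<Rightarrow> 'a \<Rightarrow> real"
  assumes "gen_ord_potential (relpay \<pi>)"
  shows "no_money_pump (relpay \<pi>)"
proof -
  obtain Q :: "'a \<Rightarrow> real" where "\<And>x y. relpay \<pi> x y > 0 \<Longrightarrow> Q y < Q x"
    using gen_ord_potential_diagonal_strict[OF assms relpay_antisym] by blast
  then show ?thesis
    by (rule strict_potential_imp_no_money_pump)
qed

end
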